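(* Let $T(\mathcal{Y})$ be the standard equilateral triangle with vertices $(0,0),(1,0),(1/2,\sqrt3/2)$, let $r\in[1,\infty]$ and $\epsilon\in[0,\sqrt3/3)$, and let $X_1,\dots,X_n$ be i.i.d. according to the segregation alternative $H^S_\epsilon$. Let $\mu_S(r,\epsilon)=\mathbf{E}^S_\epsilon[\rho_n(r)]=\frac12\mathbf{E}^S_\epsilon[h_{12}]$ and $\nu_S(r,\epsilon)=\mathbf{Cov}^S_\epsilon[h_{12},h_{13}]$. Then for all $(r,\epsilon)$ with $\nu_S(r,\epsilon)>0$, $$\sqrt{n}\,\big(\rho_n(r)-\mu_S(r,\epsilon)\big)\xrightarrow{\mathcal{L}}\mathcal{N}(0,\nu_S(r,\epsilon)).$$ Likewise, under the association alternative $H^A_\epsilon$, with $\mu_A(r,\epsilon)=\mathbf{E}^A_\epsilon[\rho_n(r)]$ and $\nu_A(r,\epsilon)=\mathbf{Cov}^A_\epsilon[h_{12},h_{13}]$, one has $\sqrt{n}(\rho_n(r)-\mu_A(r,\epsilon))\xrightarrow{\mathcal{L}}\mathcal{N}(0,\nu_A(r,\epsilon))$ whenever $\nu_A(r,\epsilon)>0$.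
   Context: $r$-factor proximity map $N^r_{\mathcal{Y}}$: the triangle is split into vertex regions $R(\mathsf{y}_j)$ by segments from its center of mass to the edge midpoints. For $x\in T(\mathcal{Y})\setminus\mathcal{Y}$ let $v(x)$ be the vertex whose region contains $x$, $e(x)$ the opposite edge, $\ell(x)$ the line through $x$ parallel to $e(x)$, $\ell_r(x)$ the parallel line on the same side of $v(x)$ with $d(v(x),\ell_r(x))=r\,d(v(x),\ell(x))$, $T_r(x)$ the triangle similar to and with the same orientation as $T(\mathcal{Y})$ with vertex $v(x)$ and opposite edge on $\ell_r(x)$; $N^r_{\mathcal{Y}}(x)=T_r(x)\cap T(\mathcal{Y})$ for $r<\infty$, $N^\infty_{\mathcal{Y}}(x)=T(\mathcal{Y})$, and $N^r_{\mathcal{Y}}(x)=\{x\}$ for $x\in\mathcal{Y}$. $\rho_n(r)$ is the number of ordered pairs $(i,j)$, $i\ne j$, with $X_j\in N^r_{\mathcal{Y}}(X_i)$, divided by $n(n-1)$; $h_{ij}=\mathbf{I}\{X_j\in N^r_{\mathcal{Y}}(X_i)\}+\mathbf{I}\{X_i\in N^r_{\mathcal{Y}}(X_j)\}$. Alternatives: for a vertex $\mathsf{y}$ let $\ell_{\mathsf{y}}(x)$ be the line through $x$ parallel to the edge opposite $\mathsf{y}$ and $T(\mathsf{y},\epsilon)=\{x\in T(\mathcal{Y}):d(\mathsf{y},\ell_{\mathsf{y}}(x))\le\epsilon\}$. Under $H^S_\epsilon$ the $X_i$ are i.i.d. uniform on $T(\mathcal{Y})\setminus\bigcup_{\mathsf{y}\in\mathcal{Y}}T(\mathsf{y},\epsilon)$;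 under $H^A_\epsilon$ they are i.i.d. uniform on $\bigcup_{\mathsf{y}\in\mathcal{Y}}T(\mathsf{y},\sqrt3/3-\epsilon)$. $\mathbf{E}^S_\epsilon,\mathbf{Cov}^S_\epsilon$ (resp. $\mathbf{E}^A_\epsilon,\mathbf{Cov}^A_\epsilon$) denote expectation and covariance under $H^S_\epsilon$ (resp. $H^A_\epsilon$). *)

theory Defs
  imports "HOL-Probability.Probability"
begin

definition vert :: "nat \<Rightarrow> real \<times> real" where
  "vert j = (if j mod 3 = 0 then (0,0) else if j mod 3 = 1 then (1,0) else (1/2, sqrt 3 / 2))"

definition Yset :: "(real \<times> real) set" where
  "Yset = {vert 0, vert 1, vert 2}"

definition Tri :: "(real \<times> real) set" where
  "Tri = convex hull Yset"

definition centroid :: "real \<times> real" where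
  "centroid = (1/3) *\<^sub>R (vert 0 + vert 1 + vert 2)"

definition vregion :: "nat \<Rightarrow> (real \<times> real) set" where
  "vregion j = convex hull {vert j, midpoint (vert j) (vert (j+1)), centroid,
                            midpoint (vert j) (vert (j+2))}"

text \<open>Index of the vertex whose region contains x (least index on the measure-zero
  boundaries).\<close>
definition vidx :: "real \<times> real \<Rightarrow> nat" where
  "vidx x = (LEAST j. x \<in> vregion j)"

definition pline :: "nat \<Rightarrow> real \<times> real \<Rightarrow> (real \<times> real) set" where
  "pline j x = {x + t *\<^sub>R (vert (j+2) - vert (j+1)) | t. True}"

definition dvl :: "nat \<Rightarrow> real \<times> real \<Rightarrow> real" where
  "dvl j x = infdist (vert j) (pline j x)"

text \<open>T_r(x): triangle similar to and with the same orientation as T(Y), with vertex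
  v(x) and opposite edge on l_r(x), i.e. the image of T(Y) under the homothety centred at
  v(x) with ratio d(v(x), l_r(x)) / d(v(x), e(x)), where d(v(x),l_r(x)) = r d(v(x),l(x)).\<close>
definition Tr :: "real \<Rightarrow> real \<times> real \<Rightarrow> (real \<times> real) set" where
  "Tr r x = (let j = vidx x; v = vert j;
                 lam = r * dvl j x / infdist v (pline j (vert (j+1)))
             in (\<lambda>z. v + lam *\<^sub>R (z - v)) ` Tri)"

definition NY :: "ereal \<Rightarrow> real \<times> real \<Rightarrow> (real \<times> real) set" where
  "NY r x = (if x \<in> Yset then {x}
             else if r = \<infinity> then Tri
             else Tr (real_of_ereal r) x \<inter> Tri)"

definition hker :: "ereal \<Rightarrow> real \<times> real \<Rightarrow> real \<times> real \<Rightarrow> real" where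
  "hker r x y = indicator (NY r x) y + indicator (NY r y) x"

definition rho :: "ereal \<Rightarrow> nat \<Rightarrow> (nat \<Rightarrow> real \<times> real) \<Rightarrow> real" where
  "rho r n xs = (\<Sum>i\<in>{1..n}. \<Sum>j\<in>{1..n} - {i}. indicator (NY r (xs i)) (xs j))
                 / (real n * (real n - 1))"

definition Tdel :: "nat \<Rightarrow> real \<Rightarrow> (real \<times> real) set" where
  "Tdel j e = {x \<in> Tri. dvl j x \<le> e}"

definition HS :: "real \<Rightarrow> (real \<times> real) measure" where
  "HS e = uniform_measure lborel (Tri - (\<Union>j<3. Tdel j e))"

definition HA :: "real \<Rightarrow> (real \<times> real) measure" where
  "HA e = uniform_measure lborel (\<Union>j<3. Tdel j (sqrt 3 / 3 - e))"

definition covar :: "'w measure \<Rightarrow> ('w \<Rightarrow> real) \<Rightarrow> ('w \<Rightarrow> real) \<Rightarrow> real" where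
  "covar M f g = prob_space.expectation M (\<lambda>w. f w * g w)
                 - prob_space.expectation M f * prob_space.expectation M g"

definition iid_seq :: "'w measure \<Rightarrow> (nat \<Rightarrow> 'w \<Rightarrow> real \<times> real) \<Rightarrow> (real \<times> real) measure \<Rightarrow> bool" where
  "iid_seq M X P \<longleftrightarrow> prob_space M \<and> prob_space.indep_vars M (\<lambda>_. borel) X UNIV
     \<and> (\<forall>i. X i \<in> borel_measurable M \<and> distr M borel (X i) = P)"

definition mu :: "'w measure \<Rightarrow> (nat \<Rightarrow> 'w \<Rightarrow> real \<times> real) \<Rightarrow> ereal \<Rightarrow> real" where
  "mu M X r = prob_space.expectation M (\<lambda>w. hker r (X 1 w) (X 2 w)) / 2"

definition nu :: "'w measure \<Rightarrow> (nat \<Rightarrow> 'w \<Rightarrow> real \<times> real) \<Rightarrow> ereal \<Rightarrow> real" where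
  "nu M X r = covar M (\<lambda>w. hker r (X 1 w) (X 2 w)) (\<lambda>w. hker r (X 1 w) (X 3 w))"

end

theory Submission
  imports Defs
begin

text \<open>The relative density \<open>rho_n(r)\<close> is a U-statistic of order two with the kernel
  \<open>g(x,y) = 1{y \<in> N_r(x)}\<close>, which takes values in [0,1]; so the theorem is an instance of the
  central limit theorem for U-statistics of an i.i.d. sample, for any common law, in particular
  under \<open>H^S_eps\<close> and \<open>H^A_eps\<close>. The only input from the geometry is the measurability of \<open>g\<close>.

  The CLT is proved with Hoeffding's projection. With \<open>h(x,y) = g(x,y) + g(y,x)\<close> and
  \<open>h1(x) = E h(x,X)\<close>, the quantity \<open>sqrt n (U_n - E h / 2)\<close> is the normalised sum of the i.i.d.
  variables \<open>h1(X_i) - E h1\<close>, whose variance is \<open>Cov[h(X_1,X_2), h(X_1,X_3)]\<close>, plus a remainder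
  built from the degenerate kernel \<open>psi(x,y) = h(x,y) - h1(x) - h1(y) + E h1\<close>. Terms of the
  remainder belonging to different unordered index pairs are uncorrelated, so its second moment
  is \<open>O(1/n)\<close>; the Lindeberg-Levy CLT and a Slutsky argument finish the proof.\<close>

section \<open>Perturbations of asymptotically normal sequences\<close>

lemma cdf_normal_density_zero:
  assumes s: "0 < s"
  shows "cdf (density lborel (normal_density 0 s)) x = cdf std_normal_distribution (x / s)"
proof -
  interpret N: prob_space std_normal_distribution
    by (metis real_distribution.axioms(1) real_dist_normal_dist)
  have "distributed std_normal_distribution lborel (\<lambda>x. x) std_normal_density"
    unfolding distributed_def by (auto simp: distr_id2 cong: distr_cong)
  then have "distributed std_normal_distribution lborel (\<lambda>x. 0 + s * x) (normal_density (0 + s * 0) (\<bar>s\<bar> * 1))"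
    by (rule N.normal_density_affine) (use s in auto)
  then have scaled: "distr std_normal_distribution lborel (\<lambda>x. s * x) = density lborel (normal_density 0 s)"
    using s by (simp add: distributed_def)
  have "cdf (density lborel (normal_density 0 s)) x
      = measure std_normal_distribution ((\<lambda>x. s * x) -` {..x} \<inter> space std_normal_distribution)"
    unfolding scaled[symmetric] cdf_def by (rule measure_distr) auto
  also have "(\<lambda>x. s * x) -` {..x} \<inter> space std_normal_distribution = {..x/s}"
    using s by (auto simp: field_simps)
  finally show ?thesis by (simp add: cdf_def)
qed

lemma isCont_std_normal_cdf: "isCont (cdf std_normal_distribution) t"
proof -
  interpret real_distribution std_normal_distribution by (rule real_dist_normal_dist)
  have "emeasure std_normal_distribution {t} = 0"
    by (subst emeasure_density) (auto intro!: nn_integral_zero' eventually_mono[OF AE_lborel_singleton[of t]])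
  then show ?thesis using isCont_cdf by (simp add: measure_def)
qed

lemma cdf_distr_borel:
  assumes "f \<in> borel_measurable M"
  shows "cdf (distr M borel f) t = measure M {w\<in>space M. f w \<le> t}"
proof -
  have "cdf (distr M borel f) t = measure M (f -` {..t} \<inter> space M)"
    unfolding cdf_def by (rule measure_distr) (use assms in auto)
  also have "f -` {..t} \<inter> space M = {w\<in>space M. f w \<le> t}" by auto
  finally show ?thesis .
qed

lemma (in prob_space) prob_le_affine_perturbation:
  fixes W R Z :: "'a \<Rightarrow> real"
  assumes s: "0 < s" and [measurable]: "W \<in> borel_measurable M" "R \<in> borel_measurable M" "Z \<in> borel_measurable M"
    and Z: "\<And>w. w \<in> space M \<Longrightarrow> Z w = s * W w + R w"
  shows "prob {w\<in>space M. Z w \<le> x} \<le> prob {w\<in>space M. W w \<le> (x + d) / s} + prob {w\<in>space M. d \<le> \<bar>R w\<bar>}"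
    and "prob {w\<in>space M. W w \<le> (x - d) / s} \<le> prob {w\<in>space M. Z w \<le> x} + prob {w\<in>space M. d \<le> \<bar>R w\<bar>}"
proof -
  have "{w\<in>space M. Z w \<le> x} \<subseteq> {w\<in>space M. W w \<le> (x + d) / s} \<union> {w\<in>space M. d \<le> \<bar>R w\<bar>}"
    using s Z by (auto simp: field_simps)
  then have "prob {w\<in>space M. Z w \<le> x} \<le> prob ({w\<in>space M. W w \<le> (x + d) / s} \<union> {w\<in>space M. d \<le> \<bar>R w\<bar>})"
    by (intro finite_measure_mono) measurable
  also have "\<dots> \<le> prob {w\<in>space M. W w \<le> (x + d) / s} + prob {w\<in>space M. d \<le> \<bar>R w\<bar>}"
    by (rule measure_Un_le) measurable
  finally show "prob {w\<in>space M. Z w \<le> x} \<le> \<dots>" .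
  have "{w\<in>space M. W w \<le> (x - d) / s} \<subseteq> {w\<in>space M. Z w \<le> x} \<union> {w\<in>space M. d \<le> \<bar>R w\<bar>}"
    using s Z by (auto simp: field_simps)
  then have "prob {w\<in>space M. W w \<le> (x - d) / s} \<le> prob ({w\<in>space M. Z w \<le> x} \<union> {w\<in>space M. d \<le> \<bar>R w\<bar>})"
    by (intro finite_measure_mono) measurable
  also have "\<dots> \<le> prob {w\<in>space M. Z w \<le> x} + prob {w\<in>space M. d \<le> \<bar>R w\<bar>}"
    by (rule measure_Un_le) measurable
  finally show "prob {w\<in>space M. W w \<le> (x - d) / s} \<le> \<dots>" .
qed

text \<open>A special case of Slutsky's theorem.\<close>
lemma (in prob_space) weak_conv_m_scaled_plus_negligible:
  fixes W R Z :: "nat \<Rightarrow> 'a \<Rightarrow> real"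
  assumes s: "0 < s"
    and [measurable]: "\<And>n. W n \<in> borel_measurable M" "\<And>n. R n \<in> borel_measurable M" "\<And>n. Z n \<in> borel_measurable M"
    and W: "weak_conv_m (\<lambda>n. distr M borel (W n)) std_normal_distribution"
    and R: "\<And>d. 0 < d \<Longrightarrow> (\<lambda>n. prob {w\<in>space M. d \<le> \<bar>R n w\<bar>}) \<longlonglongrightarrow> 0"
    and Z: "eventually (\<lambda>n. \<forall>w\<in>space M. Z n w = s * W n w + R n w) sequentially"
  shows "weak_conv_m (\<lambda>n. distr M borel (Z n)) (density lborel (normal_density 0 s))"
  unfolding weak_conv_m_def weak_conv_def
proof (intro allI impI)
  fix x :: real
  define \<Phi> where "\<Phi> = cdf std_normal_distribution"
  define FW where "FW n t = prob {w\<in>space M. W n w \<le> t}" for n t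
  define FZ where "FZ = (\<lambda>n. prob {w\<in>space M. Z n w \<le> x})"
  define p where "p n d = prob {w\<in>space M. d \<le> \<bar>R n w\<bar>}" for n d
  have FW: "(\<lambda>n. FW n t) \<longlonglongrightarrow> \<Phi> t" for t
    using W isCont_std_normal_cdf unfolding weak_conv_m_def weak_conv_def \<Phi>_def FW_def
    by (simp add: cdf_distr_borel)
  have "FZ \<longlonglongrightarrow> \<Phi> (x / s)"
  proof (rule tendstoI)
    fix e :: real assume e: "0 < e"
    obtain \<delta> where \<delta>: "0 < \<delta>" "\<And>t. dist t (x / s) < \<delta> \<Longrightarrow> dist (\<Phi> t) (\<Phi> (x / s)) < e / 3"
      using isCont_std_normal_cdf[of "x / s", unfolded continuous_at_eps_delta] e
      unfolding \<Phi>_def by (meson divide_pos_pos zero_less_numeral)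
    define d where "d = \<delta> * s / 2"
    have d: "0 < d" using \<delta> s by (simp add: d_def)
    have \<Phi>_close: "\<bar>\<Phi> ((x + d) / s) - \<Phi> (x / s)\<bar> < e / 3" "\<bar>\<Phi> ((x - d) / s) - \<Phi> (x / s)\<bar> < e / 3"
      using \<delta>(2)[of "(x + d) / s"] \<delta>(2)[of "(x - d) / s"] s \<delta>(1)
      by (auto simp: dist_real_def d_def field_simps)
    have e3: "0 < e / 3" using e by simp
    show "eventually (\<lambda>n. dist (FZ n) (\<Phi> (x / s)) < e) sequentially"
      using tendstoD[OF FW[of "(x + d) / s"] e3] tendstoD[OF FW[of "(x - d) / s"] e3] tendstoD[OF R[OF d] e3] Z
    proof eventually_elim
      case (elim n)
      have "FZ n \<le> FW n ((x + d) / s) + p n d" "FW n ((x - d) / s) \<le> FZ n + p n d"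
        using prob_le_affine_perturbation[OF s, of "W n" "R n" "Z n"] elim(4)
        unfolding FZ_def FW_def p_def by auto
      then show ?case using elim \<Phi>_close unfolding dist_real_def p_def abs_less_iff by linarith
    qed
  qed
  then show "(\<lambda>n. cdf (distr M borel (Z n)) x) \<longlonglongrightarrow> cdf (density lborel (normal_density 0 s)) x"
    by (simp add: cdf_distr_borel cdf_normal_density_zero[OF s] FZ_def \<Phi>_def)
qed

section \<open>U-statistics of i.i.d. samples with bounded kernel\<close>

lemma (in prob_space) indep_sets_reindex:
  assumes "inj_on f I" and "indep_sets F (f ` I)"
  shows "indep_sets (\<lambda>i. F (f i)) I"
  unfolding indep_sets_def
proof (intro conjI ballI allI impI)
  fix i assume "i \<in> I"
  then show "F (f i) \<subseteq> events" using assms(2) by (auto simp: indep_sets_def)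
next
  fix J A assume J: "J \<subseteq> I" "J \<noteq> {}" "finite J" and A: "A \<in> Pi J (\<lambda>i. F (f i))"
  define A' where "A' = (\<lambda>j. A (the_inv_into J f j))"
  have inj: "inj_on f J" using assms(1) J(1) by (rule inj_on_subset)
  have A'A: "A' (f j) = A j" if "j \<in> J" for j
    using the_inv_into_f_f[OF inj that] by (simp add: A'_def)
  have "A' \<in> Pi (f ` J) F" using A by (auto simp: A'A)
  then have "prob (\<Inter>j\<in>f ` J. A' j) = (\<Prod>j\<in>f ` J. prob (A' j))"
    using assms(2) J unfolding indep_sets_def by (metis finite_imageI image_is_empty image_mono)
  then show "prob (\<Inter>j\<in>J. A j) = (\<Prod>j\<in>J. prob (A j))"
    using inj by (simp add: prod.reindex A'A)
qed

lemma (in prob_space) indep_vars_reindex: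
  assumes "inj_on f I" and "indep_vars M' X (f ` I)"
  shows "indep_vars (\<lambda>i. M' (f i)) (\<lambda>i. X (f i)) I"
  using assms unfolding indep_vars_def2 by (auto intro: indep_sets_reindex[where F="\<lambda>i. {X i -` A \<inter> space M |A. A \<in> sets (M' i)}"])

lemma measurable_compose_curried:
  assumes "(\<lambda>z. f (fst z) (snd z)) \<in> borel_measurable (borel \<Otimes>\<^sub>M borel)"
    and "a \<in> N \<rightarrow>\<^sub>M borel" and "b \<in> N \<rightarrow>\<^sub>M borel"
  shows "(\<lambda>w. f (a w) (b w) :: real) \<in> borel_measurable N"
  using measurable_compose[OF measurable_Pair[OF assms(2,3)] assms(1)] by simp

locale iid_sample =
  fixes M :: "'w measure" and X :: "nat \<Rightarrow> 'w \<Rightarrow> 'a::topological_space" and P :: "'a measure"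
  assumes prob_space_M: "prob_space M"
    and indep: "prob_space.indep_vars M (\<lambda>_. borel) X UNIV"
    and distr_X: "\<And>i. distr M borel (X i) = P"
begin

sublocale prob_space M by (rule prob_space_M)

lemma X_measurable[measurable]: "X i \<in> borel_measurable M"
  using indep unfolding indep_vars_def by auto

sublocale law: prob_space P
  unfolding distr_X[of 0, symmetric] by (rule prob_space_distr) simp

lemma sets_P: "sets P = sets borel"
  unfolding distr_X[of 0, symmetric] by simp

lemma integrable_P_bounded:
  fixes f :: "'a \<Rightarrow> real"
  assumes "f \<in> borel_measurable borel" and "\<And>x. \<bar>f x\<bar> \<le> B"
  shows "integrable P f"
  by (rule law.integrable_const_bound[where B=B]) (use assms in \<open>auto simp: measurable_cong_sets[OF sets_P refl]\<close>)

lemma borel_measurable_integral_P: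
  fixes F :: "'b \<Rightarrow> 'a \<Rightarrow> real"
  assumes "(\<lambda>z. F (fst z) (snd z)) \<in> borel_measurable (N \<Otimes>\<^sub>M borel)"
  shows "(\<lambda>x. \<integral>y. F x y \<partial>P) \<in> borel_measurable N"
proof -
  have "case_prod F \<in> borel_measurable (N \<Otimes>\<^sub>M P)"
    unfolding measurable_cong_sets[OF sets_pair_measure_cong[OF refl sets_P] refl]
    using assms by (simp add: case_prod_beta')
  then show ?thesis by (rule law.borel_measurable_lebesgue_integral)
qed

lemma expectation_X:
  fixes f :: "'a \<Rightarrow> real"
  assumes [measurable]: "f \<in> borel_measurable borel"
  shows "expectation (\<lambda>w. f (X i w)) = (\<integral>x. f x \<partial>P)"
proof -
  have "(\<integral>x. f x \<partial>distr M borel (X i)) = expectation (\<lambda>w. f (X i w))"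
    by (rule integral_distr) simp_all
  then show ?thesis by (simp add: distr_X)
qed

lemma expectation_integrate_fresh:
  fixes G :: "(nat \<Rightarrow> 'a) \<Rightarrow> real" and f :: "'a \<Rightarrow> 'a \<Rightarrow> real"
  assumes A: "finite A" "k \<in> A" "l \<notin> A"
    and [measurable]: "G \<in> borel_measurable (PiM A (\<lambda>_. borel))" and G: "\<And>v. \<bar>G v\<bar> \<le> B\<^sub>G"
    and f_measurable: "(\<lambda>z. f (fst z) (snd z)) \<in> borel_measurable (borel \<Otimes>\<^sub>M borel)"
    and f: "\<And>x y. \<bar>f x y\<bar> \<le> B\<^sub>f"
  shows "expectation (\<lambda>w. G (restrict (\<lambda>i. X i w) A) * f (X k w) (X l w))
       = expectation (\<lambda>w. G (restrict (\<lambda>i. X i w) A) * (\<integral>y. f (X k w) y \<partial>P))"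
proof -
  note measurable_compose_curried[OF f_measurable, measurable (raw)]
  define MA where "MA = PiM A (\<lambda>_. borel :: 'a measure)"
  define Ml where "Ml = PiM {l} (\<lambda>_. borel :: 'a measure)"
  define V where "V w = restrict (\<lambda>i. X i w) A" for w
  define L where "L w = restrict (\<lambda>i. X i w) {l}" for w
  have [measurable]: "V \<in> measurable M MA" "L \<in> measurable M Ml"
    unfolding V_def L_def MA_def Ml_def by measurable
  have "indep_var MA V Ml L"
    unfolding V_def L_def MA_def Ml_def by (rule indep_var_restrict[OF indep]) (use A in auto)
  then have joint: "distr M (MA \<Otimes>\<^sub>M Ml) (\<lambda>w. (V w, L w)) = distr M MA V \<Otimes>\<^sub>M distr M Ml L"
    unfolding indep_var_distribution_eq by simp
  interpret VL: pair_prob_space "distr M MA V" "distr M Ml L"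
    by (simp add: pair_prob_space_def pair_sigma_finite_def prob_space_distr prob_space_imp_sigma_finite)
  define F where "F z = G (fst z) * f (fst z k) (snd z l)" for z
  have [measurable]: "F \<in> borel_measurable (MA \<Otimes>\<^sub>M Ml)"
    unfolding F_def MA_def Ml_def using A(2) by measurable
  have "integrable (distr M MA V \<Otimes>\<^sub>M distr M Ml L) F"
    by (rule VL.integrable_const_bound[where B="B\<^sub>G * B\<^sub>f"])
       (auto simp: F_def abs_mult intro!: mult_mono G f order_trans[OF abs_ge_zero G])
  note Fubini = VL.integral_fst'[OF this, symmetric]
  have inner: "(\<integral>u. f x (u l) \<partial>distr M Ml L) = (\<integral>y. f x y \<partial>P)" for x
  proof -
    have [measurable]: "(\<lambda>u. f x (u l)) \<in> borel_measurable Ml"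
      unfolding Ml_def by measurable
    have "(\<integral>u. f x (u l) \<partial>distr M Ml L) = expectation (\<lambda>w. f x (X l w))"
      by (subst integral_distr) (simp_all add: L_def)
    also have "\<dots> = (\<integral>y. f x y \<partial>P)" by (rule expectation_X) simp
    finally show ?thesis .
  qed
  have [measurable]: "G \<in> borel_measurable MA" unfolding MA_def by simp
  have [measurable]: "(\<lambda>v. \<integral>y. f (v k) y \<partial>P) \<in> borel_measurable MA"
    unfolding MA_def using A(2) by (intro borel_measurable_integral_P) measurable
  have "expectation (\<lambda>w. G (V w) * f (X k w) (X l w)) = expectation (\<lambda>w. F (V w, L w))"
    using A(2) by (simp add: F_def V_def L_def)
  also have "\<dots> = integral\<^sup>L (distr M MA V \<Otimes>\<^sub>M distr M Ml L) F"
    unfolding joint[symmetric] by (rule integral_distr[symmetric]) simp_all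
  also have "\<dots> = (\<integral>v. G v * (\<integral>y. f (v k) y \<partial>P) \<partial>distr M MA V)"
    unfolding Fubini by (simp add: F_def inner)
  also have "\<dots> = expectation (\<lambda>w. G (V w) * (\<integral>y. f (X k w) y \<partial>P))"
    using A(2) by (subst integral_distr) (simp_all add: V_def)
  finally show ?thesis by (simp add: V_def)
qed

lemma integral_P_bounds:
  fixes f :: "'a \<Rightarrow> real"
  assumes [measurable]: "f \<in> borel_measurable borel" and a: "\<And>x. a \<le> f x" and b: "\<And>x. f x \<le> b"
  shows "a \<le> (\<integral>x. f x \<partial>P)" and "(\<integral>x. f x \<partial>P) \<le> b"
proof -
  have "\<bar>f x\<bar> \<le> \<bar>a\<bar> + \<bar>b\<bar>" for x
    using a[of x] b[of x] by arith
  then have f: "integrable P f" by (intro integrable_P_bounded) simp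
  have "(\<integral>x. a \<partial>P) \<le> (\<integral>x. f x \<partial>P)" "(\<integral>x. f x \<partial>P) \<le> (\<integral>x. b \<partial>P)"
    by (intro integral_mono f a b; simp)+
  then show "a \<le> (\<integral>x. f x \<partial>P)" and "(\<integral>x. f x \<partial>P) \<le> b"
    by (simp_all add: law.prob_space)
qed

lemma indep_vars_shifted: "indep_vars (\<lambda>_. borel) (\<lambda>i. X (Suc i)) UNIV"
  using indep_vars_reindex[of Suc UNIV "\<lambda>_. borel" X] indep_vars_subset[OF indep] by simp

end

locale ustat = iid_sample M X P
  for M :: "'w measure" and X :: "nat \<Rightarrow> 'w \<Rightarrow> 'a::topological_space" and P +
  fixes g :: "'a \<Rightarrow> 'a \<Rightarrow> real"
  assumes g_measurable: "(\<lambda>z. g (fst z) (snd z)) \<in> borel_measurable (borel \<Otimes>\<^sub>M borel)"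
    and g_nonneg: "\<And>x y. 0 \<le> g x y" and g_le_1: "\<And>x y. g x y \<le> 1"
begin

definition U :: "nat \<Rightarrow> 'w \<Rightarrow> real" where
  "U n w = (\<Sum>i\<in>{1..n}. \<Sum>j\<in>{1..n} - {i}. g (X i w) (X j w)) / (real n * (real n - 1))"

definition h :: "'a \<Rightarrow> 'a \<Rightarrow> real" where "h x y = g x y + g y x"

definition h1 :: "'a \<Rightarrow> real" where "h1 x = (\<integral>y. h x y \<partial>P)"

definition mean_h :: real where "mean_h = (\<integral>x. h1 x \<partial>P)"

definition var_h1 :: real where "var_h1 = (\<integral>x. (h1 x)\<^sup>2 \<partial>P) - mean_h\<^sup>2"

definition psi :: "'a \<Rightarrow> 'a \<Rightarrow> real" where "psi x y = h x y - h1 x - h1 y + mean_h"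

lemmas g_comp_measurable[measurable (raw)] = measurable_compose_curried[OF g_measurable]

lemma h_measurable: "(\<lambda>z. h (fst z) (snd z)) \<in> borel_measurable (borel \<Otimes>\<^sub>M borel)"
  unfolding h_def by measurable

lemmas h_comp_measurable[measurable (raw)] = measurable_compose_curried[OF h_measurable]

lemma h1_measurable[measurable]: "h1 \<in> borel_measurable borel"
  unfolding h1_def[abs_def] by (rule borel_measurable_integral_P) measurable

lemma psi_measurable: "(\<lambda>z. psi (fst z) (snd z)) \<in> borel_measurable (borel \<Otimes>\<^sub>M borel)"
  unfolding psi_def by measurable

lemmas psi_comp_measurable[measurable (raw)] = measurable_compose_curried[OF psi_measurable]

lemma h_bounds: "0 \<le> h x y" "h x y \<le> 2"
  using g_nonneg[of x y] g_le_1[of x y] g_nonneg[of y x] g_le_1[of y x] by (auto simp: h_def)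

lemma h1_bounds: "0 \<le> h1 x" "h1 x \<le> 2"
proof -
  have "(\<lambda>y. h x y) \<in> borel_measurable borel" by measurable
  from integral_P_bounds[OF this h_bounds] show "0 \<le> h1 x" "h1 x \<le> 2"
    by (simp_all add: h1_def)
qed

lemma mean_h_bounds: "0 \<le> mean_h" "mean_h \<le> 2"
  using integral_P_bounds[OF h1_measurable h1_bounds] by (simp_all add: mean_h_def)

lemma abs_psi_le: "\<bar>psi x y\<bar> \<le> 4"
  using h_bounds[of x y] h1_bounds[of x] h1_bounds[of y] mean_h_bounds by (auto simp: psi_def)

lemma abs_psi_mult_psi_le: "\<bar>psi x y * psi x' y'\<bar> \<le> 16"
proof -
  have "\<bar>psi x y\<bar> * \<bar>psi x' y'\<bar> \<le> 4 * 4" by (intro mult_mono abs_psi_le) simp_all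
  then show ?thesis by (simp add: abs_mult)
qed

lemma psi_commute: "psi x y = psi y x"
  by (simp add: psi_def h_def)

lemma integral_psi: "(\<integral>y. psi x y \<partial>P) = 0"
proof -
  have "integrable P (h x)" "integrable P h1"
    by (rule integrable_P_bounded[where B=2]; simp add: h_bounds h1_bounds)+
  then have "(\<integral>y. psi x y \<partial>P) = (\<integral>y. h x y \<partial>P) - h1 x - (\<integral>y. h1 y \<partial>P) + mean_h"
    by (simp add: psi_def law.prob_space)
  then show ?thesis by (simp add: h1_def mean_h_def)
qed

lemma expectation_h:
  assumes "i \<noteq> j"
  shows "expectation (\<lambda>w. h (X i w) (X j w)) = mean_h"
proof -
  have "expectation (\<lambda>w. h (X i w) (X j w)) = expectation (\<lambda>w. h1 (X i w))"
    using expectation_integrate_fresh[where A="{i}" and k=i and l=j and G="\<lambda>_. 1" and f=h and B\<^sub>G=1 and B\<^sub>f=2]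
      assms h_measurable by (simp add: h_bounds h1_def[symmetric])
  also have "\<dots> = mean_h" unfolding mean_h_def by (rule expectation_X) simp
  finally show ?thesis .
qed

lemma expectation_h_mult_h:
  assumes "i \<noteq> j" "i \<noteq> l" "j \<noteq> l"
  shows "expectation (\<lambda>w. h (X i w) (X j w) * h (X i w) (X l w)) = (\<integral>x. (h1 x)\<^sup>2 \<partial>P)"
proof -
  have "expectation (\<lambda>w. h (X i w) (X j w) * h (X i w) (X l w))
      = expectation (\<lambda>w. h (X i w) (X j w) * h1 (X i w))"
    using expectation_integrate_fresh[where A="{i,j}" and k=i and l=l and G="\<lambda>v. h (v i) (v j)"
        and f=h and B\<^sub>G=2 and B\<^sub>f=2] assms h_measurable by (simp add: h_bounds h1_def[symmetric])
  also have "\<dots> = expectation (\<lambda>w. h1 (X i w) * h (X i w) (X j w))"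
    by (simp add: mult.commute)
  also have "\<dots> = expectation (\<lambda>w. (h1 (X i w))\<^sup>2)"
    using expectation_integrate_fresh[where A="{i}" and k=i and l=j and G="\<lambda>v. h1 (v i)"
        and f=h and B\<^sub>G=2 and B\<^sub>f=2] assms h_measurable
    by (simp add: h_bounds h1_bounds h1_def[symmetric] power2_eq_square)
  also have "\<dots> = (\<integral>x. (h1 x)\<^sup>2 \<partial>P)" by (rule expectation_X) simp
  finally show ?thesis .
qed

lemma covar_h_eq_var_h1:
  "covar M (\<lambda>w. h (X 1 w) (X 2 w)) (\<lambda>w. h (X 1 w) (X 3 w)) = var_h1"
  unfolding covar_def var_h1_def
  using expectation_h_mult_h[of 1 2 3] expectation_h[of 1 2] expectation_h[of 1 3]
  by (simp add: power2_eq_square)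

text \<open>The degenerate part is orthogonal on pairs of distinct index pairs: some observation of
  one pair is fresh, and integrating it out of \<open>psi\<close> gives 0.\<close>
lemma expectation_psi_mult_psi:
  assumes "i \<noteq> j" "k \<noteq> l" "\<not> ((k = i \<and> l = j) \<or> (k = j \<and> l = i))"
  shows "expectation (\<lambda>w. psi (X i w) (X j w) * psi (X k w) (X l w)) = 0"
proof -
  have fresh: "expectation (\<lambda>w. psi (X i w) (X j w) * psi (X a w) (X b w)) = 0"
    if "b \<notin> {i, j, a}" for a b
    using expectation_integrate_fresh[where A="{i,j,a}" and k=a and l=b and G="\<lambda>v. psi (v i) (v j)"
        and f=psi and B\<^sub>G=4 and B\<^sub>f=4] that psi_measurable
    by (simp add: abs_psi_le integral_psi)
  show ?thesis
  proof (cases "l \<in> {i, j}")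
    case False
    then show ?thesis using fresh[of l k] assms by auto
  next
    case True
    then have "k \<notin> {i, j}" using assms by auto
    then show ?thesis using fresh[of k l] assms by (auto simp: psi_commute[of "X k _"])
  qed
qed

end

definition offdiag :: "nat \<Rightarrow> (nat \<times> nat) set" where
  "offdiag n = Sigma {1..n} (\<lambda>i. {1..n} - {i})"

lemma finite_offdiag: "finite (offdiag n)"
  unfolding offdiag_def by auto

lemma card_offdiag: "real (card (offdiag n)) = real n * (real n - 1)"
proof -
  have "card (offdiag n) = (\<Sum>i\<in>{1..n}. card ({1..n} - {i}))"
    unfolding offdiag_def by simp
  also have "\<dots> = n * (n - 1)" by simp
  finally show ?thesis by (cases n) (simp_all add: algebra_simps)
qed

lemma sum_offdiag_swap:
  assumes "finite I"
  shows "(\<Sum>i\<in>I. \<Sum>j\<in>I - {i}. f i j) = (\<Sum>j\<in>I. \<Sum>i\<in>I - {j}. f i j :: real)"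
proof -
  have "\<And>i. I - {i} = {j\<in>I. i \<noteq> j}" "\<And>j. I - {j} = {i\<in>I. i \<noteq> j}" by auto
  then show ?thesis using sum.swap_restrict[OF assms assms, of f "\<lambda>i j. i \<noteq> j"] by simp
qed

lemma sum_offdiag_const:
  assumes "finite I"
  shows "(\<Sum>i\<in>I. \<Sum>j\<in>I - {i}. b i :: real) = (real (card I) - 1) * (\<Sum>i\<in>I. b i)"
proof -
  have "(\<Sum>i\<in>I. \<Sum>j\<in>I - {i}. b i) = (\<Sum>i\<in>I. (real (card I) - 1) * b i)"
  proof (rule sum.cong[OF refl])
    fix i assume i: "i \<in> I"
    then have "1 \<le> card I" using assms by (metis One_nat_def Suc_leI card_gt_0_iff empty_iff)
    then show "(\<Sum>j\<in>I - {i}. b i) = (real (card I) - 1) * b i" using i assms by (simp add: of_nat_diff)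
  qed
  then show ?thesis by (simp add: sum_distrib_left)
qed

lemma sum_offdiag_decompose:
  assumes "finite I"
  shows "(\<Sum>i\<in>I. \<Sum>j\<in>I - {i}. (a i j + a j i) - b i - b j + c)
     = 2 * (\<Sum>i\<in>I. \<Sum>j\<in>I - {i}. a i j) - 2 * (real (card I) - 1) * (\<Sum>i\<in>I. b i)
       + real (card I) * (real (card I) - 1) * (c :: real)"
proof -
  have "(\<Sum>i\<in>I. \<Sum>j\<in>I - {i}. (a i j + a j i) - b i - b j + c)
     = (\<Sum>i\<in>I. \<Sum>j\<in>I - {i}. a i j) + (\<Sum>i\<in>I. \<Sum>j\<in>I - {i}. a j i)
       - (\<Sum>i\<in>I. \<Sum>j\<in>I - {i}. b i) - (\<Sum>i\<in>I. \<Sum>j\<in>I - {i}. b j) + (\<Sum>i\<in>I. \<Sum>j\<in>I - {i}. c)"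
    by (simp add: sum.distrib sum_subtractf)
  then show ?thesis
    using sum_offdiag_swap[OF assms, of "\<lambda>i j. a j i"] sum_offdiag_swap[OF assms, of "\<lambda>i j. b j"]
      sum_offdiag_const[OF assms, of b] sum_offdiag_const[OF assms, of "\<lambda>_. c"]
    by (simp add: algebra_simps)
qed

context ustat
begin

definition proj :: "nat \<Rightarrow> 'w \<Rightarrow> real" where "proj i w = h1 (X (Suc i) w) - mean_h"

definition degen :: "nat \<Rightarrow> 'w \<Rightarrow> real" where
  "degen n w = (\<Sum>(i, j)\<in>offdiag n. psi (X i w) (X j w))"

definition remainder :: "nat \<Rightarrow> 'w \<Rightarrow> real" where
  "remainder n w = sqrt (real n) / (2 * real n * (real n - 1)) * degen n w"

lemma proj_measurable[measurable]: "proj i \<in> borel_measurable M"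
  unfolding proj_def by measurable

lemma degen_measurable[measurable]: "degen n \<in> borel_measurable M"
  unfolding degen_def by measurable

lemma remainder_measurable[measurable]: "remainder n \<in> borel_measurable M"
  unfolding remainder_def by measurable

lemma U_measurable[measurable]: "U n \<in> borel_measurable M"
  unfolding U_def by measurable

lemma clt_proj:
  assumes "0 < var_h1"
  shows "weak_conv_m (\<lambda>n. distr M borel (\<lambda>w. (\<Sum>i<n. proj i w) / sqrt (real n * var_h1))) std_normal_distribution"
proof -
  have indep_proj: "indep_vars (\<lambda>_. borel) proj UNIV"
    using indep_vars_compose2[OF indep_vars_shifted, of "\<lambda>_ x. h1 x - mean_h" "\<lambda>_. borel"]
    by (simp add: proj_def[abs_def])
  have distr_proj: "distr M borel (proj i) = distr P borel (\<lambda>x. h1 x - mean_h)" for i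
  proof -
    have "distr M borel (proj i) = distr (distr M borel (X (Suc i))) borel (\<lambda>x. h1 x - mean_h)"
      by (subst distr_distr) (simp_all add: proj_def[abs_def] comp_def)
    then show ?thesis by (simp add: distr_X)
  qed
  have "(h1 x)\<^sup>2 \<le> 2\<^sup>2" for x using h1_bounds[of x] by (intro power_mono) simp_all
  then have "\<bar>h1 x\<bar> \<le> 4" "\<bar>(h1 x)\<^sup>2\<bar> \<le> 4" for x using h1_bounds[of x] by auto
  then have h1_integrable: "integrable P h1" "integrable P (\<lambda>x. (h1 x)\<^sup>2)"
    by (intro integrable_P_bounded[where B=4]; simp)+
  have mean_proj: "expectation (proj i) = 0" for i
    using expectation_X[of "\<lambda>x. h1 x - mean_h" "Suc i"] h1_integrable
    by (simp add: proj_def[abs_def] mean_h_def law.prob_space)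
  have "variance (proj i) = (\<integral>x. (h1 x - mean_h)\<^sup>2 \<partial>P)" for i
    using expectation_X[of "\<lambda>x. (h1 x - mean_h)\<^sup>2" "Suc i"] by (simp add: mean_proj proj_def)
  also have "\<dots> = (\<integral>x. (h1 x)\<^sup>2 \<partial>P) - 2 * mean_h * (\<integral>x. h1 x \<partial>P) + mean_h\<^sup>2"
    using h1_integrable by (simp add: power2_diff law.prob_space)
  also have "\<dots> = var_h1" by (simp add: var_h1_def mean_h_def power2_eq_square)
  finally have var_proj: "variance (proj i) = var_h1" for i .
  have "\<bar>proj i w\<bar> \<le> 2" for i w
    unfolding proj_def using h1_bounds[of "X (Suc i) w"] mean_h_bounds by arith
  then have "(proj i w)\<^sup>2 \<le> 2\<^sup>2" for i w
    using abs_le_square_iff[of "proj i w" 2] by simp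
  then have "integrable M (\<lambda>w. (proj i w)\<^sup>2)" for i
    by (intro integrable_const_bound[where B=4]) simp_all
  from central_limit_theorem_zero_mean[OF indep_proj mean_proj _ this _ distr_proj, of "sqrt var_h1"]
  show ?thesis using assms var_proj by simp
qed

lemma sum_proj: "(\<Sum>i<n. proj i w) = (\<Sum>i\<in>{1..n}. h1 (X i w)) - real n * mean_h"
proof -
  have "{1..n} = Suc ` {..<n}"
  proof (auto simp: image_iff)
    fix x assume "Suc 0 \<le> x" "x \<le> n"
    then show "\<exists>y\<in>{..<n}. x = Suc y" by (intro bexI[of _ "x - 1"]) auto
  qed
  then have "(\<Sum>i\<in>{1..n}. h1 (X i w)) = (\<Sum>i<n. h1 (X (Suc i) w))"
    by (simp add: sum.reindex)
  then show ?thesis by (simp add: proj_def sum_subtractf)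
qed

lemma hoeffding_decomposition:
  assumes n: "2 \<le> n" and var: "0 < var_h1"
  shows "sqrt (real n) * (U n w - mean_h / 2)
       = sqrt var_h1 * ((\<Sum>i<n. proj i w) / sqrt (real n * var_h1)) + remainder n w"
proof -
  define G where "G = (\<Sum>i\<in>{1..n}. \<Sum>j\<in>{1..n} - {i}. g (X i w) (X j w))"
  define H where "H = (\<Sum>i\<in>{1..n}. h1 (X i w))"
  have "degen n w = (\<Sum>i\<in>{1..n}. \<Sum>j\<in>{1..n} - {i}. psi (X i w) (X j w))"
    unfolding degen_def offdiag_def by (simp add: sum.Sigma)
  also have "\<dots> = 2 * G - 2 * (real n - 1) * H + real n * (real n - 1) * mean_h"
    unfolding psi_def h_def G_def H_def
    using sum_offdiag_decompose[of "{1..n}" "\<lambda>i j. g (X i w) (X j w)" "\<lambda>i. h1 (X i w)" mean_h] by simp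
  finally have degen_eq: "degen n w = \<dots>" .
  have n_pos: "0 < real n" "0 < real n - 1" using n by auto
  have "sqrt var_h1 * ((\<Sum>i<n. proj i w) / sqrt (real n * var_h1)) = (H - real n * mean_h) / sqrt (real n)"
    using var by (simp add: sum_proj H_def real_sqrt_mult)
  moreover have "sqrt (real n) * (U n w - mean_h / 2) = (H - real n * mean_h) / sqrt (real n) + remainder n w"
  proof -
    have "U n w - mean_h / 2 = (H - real n * mean_h) / real n + degen n w / (2 * real n * (real n - 1))"
      using n_pos unfolding degen_eq U_def G_def[symmetric] by (simp add: field_simps)
    moreover have "(H - real n * mean_h) / sqrt (real n) = sqrt (real n) * ((H - real n * mean_h) / real n)"
      using n_pos by (simp add: field_simps real_sqrt_divide[symmetric])
    ultimately show ?thesis by (simp add: remainder_def ring_distribs)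
  qed
  ultimately show ?thesis by simp
qed

lemma expectation_degen_sq_le: "expectation (\<lambda>w. (degen n w)\<^sup>2) \<le> 32 * (real n * (real n - 1))"
proof -
  define ps where "ps q w = psi (X (fst q) w) (X (snd q) w)" for q w
  have [measurable]: "ps q \<in> borel_measurable M" for q unfolding ps_def by measurable
  have bound: "\<bar>ps q w * ps q' w\<bar> \<le> 16" for q q' w
    unfolding ps_def by (rule abs_psi_mult_psi_le)
  have int: "integrable M (\<lambda>w. ps q w * ps q' w)" for q q'
    by (rule integrable_const_bound[where B=16]) (simp_all add: bound)
  have E_le: "expectation (\<lambda>w. ps q w * ps q' w) \<le> 16" for q q'
  proof -
    have "expectation (\<lambda>w. ps q w * ps q' w) \<le> expectation (\<lambda>_. 16)"
      by (intro integral_mono int) (auto intro: order_trans[OF abs_ge_self bound])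
    then show ?thesis by (simp add: prob_space)
  qed
  have row: "(\<Sum>q'\<in>offdiag n. expectation (\<lambda>w. ps q w * ps q' w)) \<le> 32" if q: "q \<in> offdiag n" for q
  proof -
    obtain i j where ij: "q = (i, j)" "i \<noteq> j" "(j, i) \<in> offdiag n" using q by (cases q) (auto simp: offdiag_def)
    have "expectation (\<lambda>w. ps q w * ps q' w) = 0" if q': "q' \<in> offdiag n - {(i, j), (j, i)}" for q'
    proof -
      obtain k l where "q' = (k, l)" "k \<noteq> l" "\<not> ((k = i \<and> l = j) \<or> (k = j \<and> l = i))"
        using q' by (cases q') (auto simp: offdiag_def)
      then show ?thesis using expectation_psi_mult_psi[OF ij(2)] by (simp add: ps_def ij(1))
    qed
    then have "(\<Sum>q'\<in>offdiag n. expectation (\<lambda>w. ps q w * ps q' w))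
        = (\<Sum>q'\<in>{(i, j), (j, i)}. expectation (\<lambda>w. ps q w * ps q' w))"
      using q ij by (intro sum.mono_neutral_right finite_offdiag) auto
    also have "\<dots> \<le> (\<Sum>q'\<in>{(i, j), (j, i)}. 16)"
      by (intro sum_mono E_le)
    also have "\<dots> \<le> 32" using ij by simp
    finally show ?thesis .
  qed
  have "(degen n w)\<^sup>2 = (\<Sum>q\<in>offdiag n. \<Sum>q'\<in>offdiag n. ps q w * ps q' w)" for w
    unfolding degen_def power2_eq_square sum_product by (simp add: case_prod_beta ps_def)
  then have "expectation (\<lambda>w. (degen n w)\<^sup>2) = (\<Sum>q\<in>offdiag n. \<Sum>q'\<in>offdiag n. expectation (\<lambda>w. ps q w * ps q' w))"
    by (simp add: Bochner_Integration.integral_sum Bochner_Integration.integrable_sum int)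
  also have "\<dots> \<le> (\<Sum>q\<in>offdiag n. 32)" by (rule sum_mono) (rule row)
  also have "\<dots> = 32 * (real n * (real n - 1))" by (simp add: card_offdiag)
  finally show ?thesis .
qed

lemma expectation_remainder_sq_le:
  assumes n: "2 \<le> n"
  shows "expectation (\<lambda>w. (remainder n w)\<^sup>2) \<le> 8 / (real n - 1)"
proof -
  have n_pos: "0 < real n" "0 < real n - 1" using n by auto
  have "expectation (\<lambda>w. (remainder n w)\<^sup>2) = real n / (2 * real n * (real n - 1))\<^sup>2 * expectation (\<lambda>w. (degen n w)\<^sup>2)"
    using n_pos by (simp add: remainder_def power_mult_distrib power_divide)
  also have "\<dots> \<le> real n / (2 * real n * (real n - 1))\<^sup>2 * (32 * (real n * (real n - 1)))"
    by (intro mult_left_mono expectation_degen_sq_le) simp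
  also have "\<dots> = 8 / (real n - 1)"
  proof -
    have "a / (2 * a * t)\<^sup>2 * (32 * (a * t)) = 8 / t" if "0 < a" "0 < t" for a t :: real
      using that by (simp add: power2_eq_square field_simps)
    then show ?thesis using n_pos by blast
  qed
  finally show ?thesis .
qed

lemma remainder_tendsto_zero_in_prob:
  assumes d: "0 < d"
  shows "(\<lambda>n. prob {w\<in>space M. d \<le> \<bar>remainder n w\<bar>}) \<longlonglongrightarrow> 0"
proof (rule tendsto_sandwich[where f="\<lambda>_. 0" and h="\<lambda>n. 8 / (real n - 1) / d\<^sup>2"])
  have int: "integrable M (\<lambda>w. (remainder n w)\<^sup>2)" for n
  proof -
    have "integrable M (\<lambda>w. (degen n w)\<^sup>2)"
      unfolding degen_def power2_eq_square sum_product
      by (intro Bochner_Integration.integrable_sum integrable_const_bound[where B=16])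
         (auto simp: case_prod_beta abs_psi_mult_psi_le)
    then show ?thesis unfolding remainder_def power_mult_distrib by (rule integrable_mult_right)
  qed
  show "eventually (\<lambda>n. prob {w\<in>space M. d \<le> \<bar>remainder n w\<bar>} \<le> 8 / (real n - 1) / d\<^sup>2) sequentially"
    using eventually_ge_at_top[of 2]
  proof eventually_elim
    case (elim n)
    show ?case
      by (rule order_trans[OF second_moment_method[OF remainder_measurable int d]])
         (intro divide_right_mono expectation_remainder_sq_le elim; simp)
  qed
  have "(\<lambda>n. 8 / d\<^sup>2 / real n) \<longlonglongrightarrow> 0" by (rule lim_const_over_n)
  then have "(\<lambda>n. 8 / (real (Suc n) - 1) / d\<^sup>2) \<longlonglongrightarrow> 0" by (simp add: field_simps)
  then show "(\<lambda>n. 8 / (real n - 1) / d\<^sup>2) \<longlonglongrightarrow> 0" by (rule LIMSEQ_imp_Suc)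
qed simp_all

theorem U_clt:
  assumes "0 < covar M (\<lambda>w. h (X 1 w) (X 2 w)) (\<lambda>w. h (X 1 w) (X 3 w))"
  shows "weak_conv_m (\<lambda>n. distr M borel (\<lambda>w. sqrt (real n) * (U n w - expectation (\<lambda>w. h (X 1 w) (X 2 w)) / 2)))
           (density lborel (normal_density 0 (sqrt (covar M (\<lambda>w. h (X 1 w) (X 2 w)) (\<lambda>w. h (X 1 w) (X 3 w))))))"
proof -
  have var: "0 < var_h1" using assms covar_h_eq_var_h1 by simp
  have decomp: "eventually (\<lambda>n. \<forall>w\<in>space M. sqrt (real n) * (U n w - mean_h / 2)
      = sqrt var_h1 * ((\<Sum>i<n. proj i w) / sqrt (real n * var_h1)) + remainder n w) sequentially"
    using eventually_ge_at_top[of 2] by eventually_elim (intro ballI hoeffding_decomposition[OF _ var])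
  have "weak_conv_m (\<lambda>n. distr M borel (\<lambda>w. sqrt (real n) * (U n w - mean_h / 2)))
      (density lborel (normal_density 0 (sqrt var_h1)))"
    by (rule weak_conv_m_scaled_plus_negligible[OF real_sqrt_gt_zero[OF var] _ remainder_measurable _
          clt_proj[OF var] remainder_tendsto_zero_in_prob decomp]) measurable
  moreover have "expectation (\<lambda>w. h (X 1 w) (X 2 w)) = mean_h" by (rule expectation_h) simp
  ultimately show ?thesis unfolding covar_h_eq_var_h1 by simp
qed

end

section \<open>Measurability of the proximity kernel\<close>

lemma closed_Tri: "closed Tri"
  unfolding Tri_def Yset_def by (intro compact_imp_closed compact_convex_hull finite_imp_compact) simp

lemma closed_vregion: "closed (vregion j)"
  unfolding vregion_def by (intro compact_imp_closed compact_convex_hull finite_imp_compact) simp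

lemma Tri_nonempty: "Tri \<noteq> {}"
  unfolding Tri_def Yset_def by simp

lemma sets_Tri[measurable]: "Tri \<in> sets borel"
  by (rule borel_closed[OF closed_Tri])

lemma sets_vregion[measurable]: "vregion j \<in> sets borel"
  by (rule borel_closed[OF closed_vregion])

lemma sets_Yset[measurable]: "Yset \<in> sets borel"
  by (rule borel_closed) (simp add: Yset_def finite_imp_closed)

lemma infdist_translate:
  fixes v x :: "'a::real_normed_vector"
  assumes "L \<noteq> {}"
  shows "infdist v ((\<lambda>z. x + z) ` L) = infdist (v - x) L"
proof -
  have "infdist v ((\<lambda>z. x + z) ` L) = (INF z\<in>L. dist v (x + z))"
    using assms by (simp add: infdist_notempty image_image)
  also have "\<dots> = (INF z\<in>L. dist (v - x) z)"
    by (rule INF_cong[OF refl]) (simp add: dist_norm algebra_simps)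
  finally show ?thesis using assms by (simp add: infdist_notempty)
qed

lemma dvl_eq_infdist_direction:
  "dvl j x = infdist (vert j - x) (range (\<lambda>t. t *\<^sub>R (vert (j+2) - vert (j+1))))"
proof -
  have "pline j x = (\<lambda>z. x + z) ` range (\<lambda>t. t *\<^sub>R (vert (j+2) - vert (j+1)))"
    unfolding pline_def by auto
  then show ?thesis unfolding dvl_def by (simp add: infdist_translate)
qed

lemma dvl_measurable[measurable]: "dvl j \<in> borel_measurable borel"
  unfolding dvl_eq_infdist_direction[abs_def]
  by (intro borel_measurable_continuous_onI continuous_intros)

lemma pred_diagonal[measurable]:
  "Measurable.pred (borel \<Otimes>\<^sub>M borel) (\<lambda>z::('a::{second_countable_topology, t2_space}) \<times> 'a. fst z = snd z)"
proof -
  have "closed {z::'a \<times> 'a. fst z = snd z}"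
    by (intro closed_Collect_eq continuous_intros)
  then show ?thesis unfolding pred_def borel_prod[symmetric] by (simp add: borel_closed)
qed

lemma indicator_homothety_image_measurable:
  fixes lam :: "'b \<Rightarrow> real" and v :: "'a::euclidean_space"
  assumes [measurable]: "lam \<in> borel_measurable N" and T: "closed T" "T \<noteq> {}"
  shows "(\<lambda>z. indicator ((\<lambda>u. v + lam (fst z) *\<^sub>R (u - v)) ` T) (snd z) :: real)
           \<in> borel_measurable (N \<Otimes>\<^sub>M borel)"
proof -
  have [measurable]: "T \<in> sets borel" by (rule borel_closed[OF T(1)])
  have eq: "indicator ((\<lambda>u. v + l *\<^sub>R (u - v)) ` T) y
      = (if l = 0 then indicator {v} y else indicator T (v + (1 / l) *\<^sub>R (y - v)) :: real)" for l y
  proof (cases "l = 0")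
    case True
    then show ?thesis using T(2) by (simp add: image_constant_conv)
  next
    case False
    have "y \<in> (\<lambda>u. v + l *\<^sub>R (u - v)) ` T \<longleftrightarrow> v + (1 / l) *\<^sub>R (y - v) \<in> T"
    proof
      assume "v + (1 / l) *\<^sub>R (y - v) \<in> T"
      moreover have "y = v + l *\<^sub>R ((v + (1 / l) *\<^sub>R (y - v)) - v)" using False by simp
      ultimately show "y \<in> (\<lambda>u. v + l *\<^sub>R (u - v)) ` T" by blast
    qed (use False in auto)
    then show ?thesis using False by (simp add: indicator_def)
  qed
  show ?thesis unfolding eq by measurable
qed

lemma vregion_mod3: "vregion j = vregion (j mod 3)"
proof -
  have vert_cong: "vert a = vert b" if "a mod 3 = b mod 3" for a b
    using that unfolding vert_def by simp
  have "vert j = vert (j mod 3)" "vert (j+1) = vert (j mod 3 + 1)" "vert (j+2) = vert (j mod 3 + 2)"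
    by (rule vert_cong; simp add: mod_simps)+
  then show ?thesis unfolding vregion_def by simp
qed

text \<open>The last branch is the junk value of \<open>LEAST\<close> for points outside every vertex region.\<close>
lemma vidx_cases:
  "vidx x = (if x \<in> vregion 0 then 0 else if x \<in> vregion 1 then 1
             else if x \<in> vregion 2 then 2 else (LEAST j::nat. False))"
proof -
  have "x \<in> vregion j \<longleftrightarrow> x \<in> vregion (j mod 3)" for j by (subst vregion_mod3) simp
  moreover have "j mod 3 = 0 \<or> j mod 3 = 1 \<or> j mod 3 = 2" for j :: nat by auto
  ultimately have regions: "x \<in> vregion j \<Longrightarrow> x \<in> vregion 0 \<or> x \<in> vregion 1 \<or> x \<in> vregion 2" for j
    by metis
  have ge1: "1 \<le> j" if "x \<notin> vregion 0" "x \<in> vregion j" for j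
    using that by (cases j) auto
  have ge2: "2 \<le> j" if "x \<notin> vregion 0" "x \<notin> vregion 1" "x \<in> vregion j" for j
    using that by (cases j; cases "j - 1") auto
  show ?thesis
  proof (cases "\<exists>j. x \<in> vregion j")
    case True
    then show ?thesis unfolding vidx_def using regions ge1 ge2 by (auto intro!: Least_equality)
  next
    case False
    then show ?thesis unfolding vidx_def by simp
  qed
qed

definition vertex_homothety :: "real \<Rightarrow> nat \<Rightarrow> real \<times> real \<Rightarrow> (real \<times> real) set" where
  "vertex_homothety r j x =
     (\<lambda>u. vert j + (r * dvl j x / infdist (vert j) (pline j (vert (j+1)))) *\<^sub>R (u - vert j)) ` Tri"

lemma Tr_eq_vertex_homothety: "Tr r x = vertex_homothety r (vidx x) x"
  unfolding Tr_def vertex_homothety_def Let_def ..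

lemma indicator_vertex_homothety_measurable[measurable]:
  "(\<lambda>z. indicator (vertex_homothety r j (fst z)) (snd z) :: real) \<in> borel_measurable (borel \<Otimes>\<^sub>M borel)"
  unfolding vertex_homothety_def
  by (rule indicator_homothety_image_measurable[where lam="\<lambda>x. r * dvl j x / infdist (vert j) (pline j (vert (j+1)))"])
     (simp_all add: closed_Tri Tri_nonempty)

lemma NY_measurable:
  "(\<lambda>z. indicator (NY r (fst z)) (snd z) :: real) \<in> borel_measurable (borel \<Otimes>\<^sub>M borel)"
proof -
  define c where "c = (LEAST j::nat. False)"
  define T where "T = vertex_homothety (real_of_ereal r)"
  have "indicator (NY r x) y =
     (if x \<in> Yset then (if x = y then 1 else 0) else if r = \<infinity> then indicator Tri y
      else (if x \<in> vregion 0 then indicator (T 0 x) y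
            else if x \<in> vregion 1 then indicator (T 1 x) y
            else if x \<in> vregion 2 then indicator (T 2 x) y
            else indicator (T c x) y) * indicator Tri y :: real)" for x y
    unfolding NY_def Tr_eq_vertex_homothety vidx_cases[of x] c_def[symmetric] T_def[symmetric]
    by (auto simp: indicator_def)
  then show ?thesis unfolding T_def by simp
qed

theorem theorem3:
  fixes r :: ereal and eps :: real
  assumes "1 \<le> r" and "0 \<le> eps" and "eps < sqrt 3 / 3"
  shows "(\<forall>(M :: 'w measure) X. iid_seq M X (HS eps) \<and> nu M X r > 0 \<longrightarrow>
            weak_conv_m (\<lambda>n. distr M borel (\<lambda>w. sqrt (real n) * (rho r n (\<lambda>i. X i w) - mu M X r)))
                        (density lborel (normal_density 0 (sqrt (nu M X r)))))
       \<and> (\<forall>(M :: 'w measure) X. iid_seq M X (HA eps) \<and> nu M X r > 0 \<longrightarrow>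
            weak_conv_m (\<lambda>n. distr M borel (\<lambda>w. sqrt (real n) * (rho r n (\<lambda>i. X i w) - mu M X r)))
                        (density lborel (normal_density 0 (sqrt (nu M X r)))))"
proof -
  have "weak_conv_m (\<lambda>n. distr M borel (\<lambda>w. sqrt (real n) * (rho r n (\<lambda>i. X i w) - mu M X r)))
          (density lborel (normal_density 0 (sqrt (nu M X r))))"
    if "iid_seq M X Q" and "nu M X r > 0" for M :: "'w measure" and X Q
  proof -
    have "prob_space M" "prob_space.indep_vars M (\<lambda>_. borel) X UNIV" "\<And>i. distr M borel (X i) = Q"
      using \<open>iid_seq M X Q\<close> unfolding iid_seq_def by auto
    then interpret ustat M X Q "\<lambda>x y. indicator (NY r x) y"
      by (intro ustat.intro iid_sample.intro ustat_axioms.intro NY_measurable) (simp_all add: indicator_def)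
    have hker: "hker r = h" unfolding hker_def[abs_def] h_def[abs_def] ..
    have rho: "rho r n (\<lambda>i. X i w) = U n w" for n w unfolding rho_def U_def ..
    show ?thesis
      using \<open>nu M X r > 0\<close> unfolding mu_def nu_def hker rho by (rule U_clt)
  qed
  then show ?thesis by blast
qed

end
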